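(* Let $\omega\in(0,1)$ be irrational and $s>0$. Then $$\limsup_{N\to+\infty}\Big(\sum_{j=0}^{k(N)}\frac{\log q_{j+1}}{q_j}-s\log N\Big)<+\infty$$ holds if and only if $$\limsup_{k\to+\infty}\Big(\sum_{j=0}^{k}\beta_{j-1}\log\omega_j^{-1}+s\log\beta_{k-1}\Big)<+\infty.$$
   Context: Continued fraction data of $\omega$: $\omega_0=\omega$, $\omega_{k+1}=\{1/\omega_k\}$ (fractional part), $a_{k+1}=\lfloor1/\omega_k\rfloor$; $\beta_{-1}=1$, $\beta_k=\prod_{j=0}^k\omega_j$ for $k\ge0$; the convergent denominators are $q_{-1}=0$, $q_0=1$, $q_{k+1}=a_{k+1}q_k+q_{k-1}$. $k(N)$ is defined by $q_{k(N)}\le N<q_{k(N)+1}$. *)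

theory Defs
  imports Complex_Main "HOL-Library.Extended_Real" "HOL-Library.Liminf_Limsup"
begin

fun cf_omega :: "real \<Rightarrow> nat \<Rightarrow> real" where
  "cf_omega w 0 = w"
| "cf_omega w (Suc k) = frac (1 / cf_omega w k)"

definition cf_a :: "real \<Rightarrow> nat \<Rightarrow> nat" where
  "cf_a w k = nat \<lfloor>1 / cf_omega w (k - 1)\<rfloor>"

text \<open>Shifted beta: cf_beta w m = beta_(m-1) = prod_(j<m) omega_j, so cf_beta w 0 = beta_(-1) = 1.\<close>
definition cf_beta :: "real \<Rightarrow> nat \<Rightarrow> real" where
  "cf_beta w m = (\<Prod>j<m. cf_omega w j)"

text \<open>Convergent denominators: q_(-1) = 0, q_0 = 1, q_(k+1) = a_(k+1) q_k + q_(k-1).\<close>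
fun cf_q :: "real \<Rightarrow> nat \<Rightarrow> nat" where
  "cf_q w 0 = 1"
| "cf_q w (Suc 0) = cf_a w 1"
| "cf_q w (Suc (Suc k)) = cf_a w (Suc (Suc k)) * cf_q w (Suc k) + cf_q w k"

text \<open>k(N): the index with q_k(N) <= N < q_(k(N)+1) (unique for N >= 1).\<close>
definition cf_kN :: "real \<Rightarrow> nat \<Rightarrow> nat" where
  "cf_kN w N = (THE k. cf_q w k \<le> N \<and> N < cf_q w (Suc k))"

end

theory Submission
  imports Defs "HOL-Analysis.Extended_Real_Limits"
begin

(* Write b_m = cf_beta w m = beta_(m-1). The convergent denominators satisfy 1/2 <= q_k b_k <= 1,
   so s log b_k = - s log q_k + O(1), and 1/q_j lies between b_j and b_j + b_(j+1).
   Summation by parts turns sum b_j log(1/omega_j) into sum (b_j - b_(j+1)) log(1/b_(j+1)) plus a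
   boundary term in [0, 2]; termwise this differs from log q_(j+1) / q_j by O(sqrt b_j), which is
   summable because b_(j+2) <= b_j / 2. So both expressions are, up to bounded errors, the same
   sequence h k = sum_(j<=k) log q_(j+1) / q_j - s log q_k, and the first one at N is at most
   h (k(N)) because q_(k(N)) <= N, with equality at N = q_k. *)

lemma limsup_less_infinity_iff_bounded:
  fixes x :: "nat \<Rightarrow> real"
  shows "limsup (\<lambda>n. ereal (x n)) < \<infinity> \<longleftrightarrow> (\<exists>M. \<forall>n. x n \<le> M)"
proof
  assume "\<exists>M. \<forall>n. x n \<le> M"
  then obtain M where "\<forall>n. x n \<le> M" by blast
  then have "limsup (\<lambda>n. ereal (x n)) \<le> ereal M"
    by (intro Limsup_bounded) auto
  then show "limsup (\<lambda>n. ereal (x n)) < \<infinity>"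
    using order.strict_trans1 by fastforce
qed (rule limsup_finite_then_bounded)

lemma bounded_above_iff_of_bounded_difference:
  fixes f g :: "'a \<Rightarrow> real"
  assumes "\<And>x. \<bar>f x - g x\<bar> \<le> C"
  shows "(\<exists>M. \<forall>x. f x \<le> M) \<longleftrightarrow> (\<exists>M. \<forall>x. g x \<le> M)"
proof -
  have "f x \<le> g x + C" "g x \<le> f x + C" for x
    using assms[of x] by auto
  then show ?thesis
    by (meson add_le_cancel_right order_trans)
qed

lemma mult_ln_inverse_le_sqrt:
  fixes x :: real
  assumes "0 < x"
  shows "x * ln (1 / x) \<le> 2 * sqrt x"
proof -
  define y where "y = sqrt x"
  have y: "0 < y" "x = y * y"
    using assms by (auto simp: y_def)
  have "ln (1 / y) \<le> 1 / y"
    using ln_le_minus_one[of "1 / y"] y by simp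
  then have "(y * y) * (2 * ln (1 / y)) \<le> (y * y) * (2 / y)"
    by (intro mult_left_mono) auto
  also have "\<dots> = 2 * y"
    using y by simp
  also have "(y * y) * (2 * ln (1 / y)) = x * ln (1 / x)"
    using y by (simp add: ln_div ln_mult)
  finally show ?thesis
    by (simp add: y_def)
qed

lemma summable_sqrt_if_halving:
  fixes x :: "nat \<Rightarrow> real"
  assumes nonneg: "\<And>m. 0 \<le> x m" and halving: "\<And>m. x (Suc (Suc m)) \<le> x m / 2"
  shows "summable (\<lambda>m. sqrt (x m))"
proof -
  define r :: real where "r = sqrt (1 / 2)"
  define c where "c = max (x 0) (x 1)"
  define M where "M = 2 * c"
  have r: "1 / 2 \<le> r" "r\<^sup>2 = 1 / 2"
    unfolding r_def by (rule real_le_rsqrt, simp add: power2_eq_square) simp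
  have geometric: "x m \<le> M * r ^ m \<and> x (Suc m) \<le> M * r ^ Suc m" for m
  proof (induction m)
    case 0
    have c: "0 \<le> c" "x 0 \<le> c" "x 1 \<le> c"
      using nonneg[of 0] by (auto simp: c_def)
    then have "c * 1 \<le> c * (2 * r)"
      using r(1) by (intro mult_left_mono) auto
    then have "x 0 \<le> M" "x 1 \<le> M * r"
      using c by (auto simp: M_def)
    then show ?case
      by simp
  next
    case (Suc m)
    have "x (Suc (Suc m)) \<le> x m / 2"
      by (rule halving)
    also have "\<dots> \<le> M * r ^ m / 2"
      using Suc.IH by simp
    also have "\<dots> = M * r ^ Suc (Suc m)"
      using r(2) by (simp add: power2_eq_square mult.assoc[symmetric])
    finally show ?case
      using Suc.IH by simp
  qed
  show ?thesis
  proof (rule summable_comparison_test')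
    show "summable (\<lambda>m. sqrt M * sqrt r ^ m)"
      using r by (intro summable_mult summable_geometric) (auto simp: r_def)
    show "norm (sqrt (x m)) \<le> sqrt M * sqrt r ^ m" for m
    proof -
      have "sqrt (x m) \<le> sqrt (M * r ^ m)"
        using geometric[of m] by simp
      then show ?thesis
        using nonneg[of m] by (simp add: real_sqrt_mult real_sqrt_power)
    qed
  qed
qed

lemma cf_beta_0 [simp]: "cf_beta w 0 = 1"
  by (simp add: cf_beta_def)

lemma cf_beta_Suc: "cf_beta w (Suc m) = cf_omega w m * cf_beta w m"
  by (simp add: cf_beta_def)

locale irrational_in_unit_interval =
  fixes w :: real
  assumes pos: "0 < w" and less_one: "w < 1" and irrational: "w \<notin> \<rat>"
begin

lemma cf_omega_bounds: "0 < cf_omega w j \<and> cf_omega w j < 1 \<and> cf_omega w j \<notin> \<rat>"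
proof (induction j)
  case (Suc j)
  then have "1 / cf_omega w j \<notin> \<rat>"
    by (simp add: divide_inverse)
  moreover have "frac (1 / cf_omega w j) \<noteq> 0"
    using calculation by (metis Rats_0 frac_in_Rats_iff)
  ultimately show ?case
    by (simp add: frac_lt_1 order_le_neq_trans[OF frac_ge_0])
qed (use pos less_one irrational in auto)

lemma cf_omega_pos: "0 < cf_omega w j"
  and cf_omega_less_1: "cf_omega w j < 1"
  using cf_omega_bounds by auto

lemma cf_a_Suc: "real (cf_a w (Suc j)) = 1 / cf_omega w j - cf_omega w (Suc j)"
  and cf_a_Suc_ge_1: "1 \<le> cf_a w (Suc j)"
proof -
  have "1 \<le> 1 / cf_omega w j"
    using cf_omega_pos[of j] cf_omega_less_1[of j] by simp
  then have floor: "1 \<le> \<lfloor>1 / cf_omega w j\<rfloor>"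
    by simp
  then have "real (nat \<lfloor>1 / cf_omega w j\<rfloor>) = of_int \<lfloor>1 / cf_omega w j\<rfloor>"
    by (intro of_nat_nat) linarith
  then show "real (cf_a w (Suc j)) = 1 / cf_omega w j - cf_omega w (Suc j)"
    by (simp add: cf_a_def frac_def)
  have "cf_a w (Suc j) = nat \<lfloor>1 / cf_omega w j\<rfloor>"
    by (simp add: cf_a_def)
  then show "1 \<le> cf_a w (Suc j)"
    using floor by linarith
qed

lemma cf_beta_pos: "0 < cf_beta w m"
  unfolding cf_beta_def using cf_omega_pos by (intro prod_pos) auto

lemma cf_beta_Suc_le: "cf_beta w (Suc m) \<le> cf_beta w m"
  using cf_omega_less_1[of m] cf_beta_pos[of m] by (simp add: cf_beta_Suc)

lemma cf_beta_antimono: "antimono (cf_beta w)"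
  unfolding antimono_iff_le_Suc using cf_beta_Suc_le by blast

lemma cf_beta_le_1: "cf_beta w m \<le> 1"
  using antimonoD[OF cf_beta_antimono, of 0 m] by simp

lemma cf_beta_recurrence:
  "cf_beta w m = real (cf_a w (Suc m)) * cf_beta w (Suc m) + cf_beta w (Suc (Suc m))"
  using cf_omega_pos[of m] by (simp add: cf_a_Suc cf_beta_Suc field_simps)

lemma cf_beta_Suc_Suc_le_half: "cf_beta w (Suc (Suc m)) \<le> cf_beta w m / 2"
proof -
  have "cf_beta w (Suc m) \<le> real (cf_a w (Suc m)) * cf_beta w (Suc m)"
    using cf_a_Suc_ge_1[of m] cf_beta_pos[of "Suc m"] by simp
  then show ?thesis
    using cf_beta_recurrence[of m] cf_beta_Suc_le[of "Suc m"] by linarith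
qed

lemma cf_q_Suc_mono: "cf_q w k \<le> cf_q w (Suc k)"
proof (cases k)
  case 0
  then show ?thesis
    using cf_a_Suc_ge_1[of 0] by simp
next
  case (Suc j)
  have "cf_q w (Suc j) \<le> cf_a w (Suc (Suc j)) * cf_q w (Suc j)"
    using cf_a_Suc_ge_1[of "Suc j"] by simp
  then show ?thesis
    unfolding Suc cf_q.simps by linarith
qed

lemma cf_q_mono: "mono (cf_q w)"
  unfolding mono_iff_le_Suc using cf_q_Suc_mono by blast

lemma cf_q_ge_1: "1 \<le> cf_q w k"
  using monoD[OF cf_q_mono, of 0 k] by simp

lemma cf_q_strict_mono:
  assumes "1 \<le> k"
  shows "cf_q w k < cf_q w (Suc k)"
proof -
  obtain j where k: "k = Suc j"
    using assms by (cases k) auto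
  have "cf_q w (Suc j) \<le> cf_a w (Suc (Suc j)) * cf_q w (Suc j)"
    using cf_a_Suc_ge_1[of "Suc j"] by simp
  then show ?thesis
    using cf_q_ge_1[of j] unfolding k cf_q.simps by linarith
qed

lemma cf_q_ge_index: "k \<le> cf_q w k"
proof (induction k)
  case (Suc k)
  show ?case
    using Suc.IH cf_q_ge_1[of 1] cf_q_strict_mono[of k] by (cases "k = 0") auto
qed simp

lemma cf_q_beta_identity:
  "real (cf_q w (Suc m)) * cf_beta w (Suc m) + real (cf_q w m) * cf_beta w (Suc (Suc m)) = 1"
proof (induction m)
  case 0
  then show ?case
    using cf_beta_recurrence[of 0] by simp
next
  case (Suc m)
  then show ?case
    using cf_beta_recurrence[of "Suc m"] by (simp add: algebra_simps)
qed

lemma cf_q_beta_le_1: "real (cf_q w k) * cf_beta w k \<le> 1"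
proof (cases k)
  case (Suc m)
  have "0 \<le> real (cf_q w m) * cf_beta w (Suc (Suc m))"
    using cf_beta_pos[of "Suc (Suc m)"] by simp
  then show ?thesis
    using cf_q_beta_identity[of m] by (simp add: Suc)
qed simp

lemma cf_q_inverse_le: "1 / real (cf_q w k) \<le> cf_beta w k + cf_beta w (Suc k)"
proof -
  have "1 \<le> real (cf_q w k) * (cf_beta w k + cf_beta w (Suc k))"
  proof (cases k)
    case (Suc m)
    have "real (cf_q w m) * cf_beta w (Suc (Suc m)) \<le> real (cf_q w (Suc m)) * cf_beta w (Suc (Suc m))"
      using cf_beta_pos[of "Suc (Suc m)"] cf_q_Suc_mono[of m] by (intro mult_right_mono) auto
    then show ?thesis
      using cf_q_beta_identity[of m] by (simp add: Suc algebra_simps)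
  qed (use cf_beta_pos[of 1] in simp)
  then show ?thesis
    using cf_q_ge_1[of k] by (simp add: field_simps)
qed

lemma cf_q_beta_ge_half: "1 \<le> 2 * real (cf_q w k) * cf_beta w k"
proof -
  have "1 / real (cf_q w k) \<le> 2 * cf_beta w k"
    using cf_q_inverse_le[of k] cf_beta_Suc_le[of k] by linarith
  then show ?thesis
    using cf_q_ge_1[of k] by (simp add: field_simps)
qed

lemma ln_cf_q_le: "ln (real (cf_q w k)) \<le> ln (1 / cf_beta w k)"
  using cf_q_beta_le_1[of k] cf_q_ge_1[of k] cf_beta_pos[of k] by (simp add: field_simps)

lemma ln_inverse_cf_beta_le: "ln (1 / cf_beta w k) \<le> ln 2 + ln (real (cf_q w k))"
proof -
  have "1 / cf_beta w k \<le> 2 * real (cf_q w k)"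
    using cf_q_beta_ge_half[of k] cf_beta_pos[of k] by (simp add: field_simps)
  then have "ln (1 / cf_beta w k) \<le> ln (2 * real (cf_q w k))"
    using cf_beta_pos[of k] by (intro ln_mono) auto
  also have "\<dots> = ln 2 + ln (real (cf_q w k))"
    using cf_q_ge_1[of k] by (simp add: ln_mult)
  finally show ?thesis .
qed

lemma cf_kN_unique:
  assumes "cf_q w k \<le> N" "N < cf_q w (Suc k)" "cf_q w k' \<le> N" "N < cf_q w (Suc k')"
  shows "k = k'"
proof -
  have "\<not> Suc k \<le> k'" "\<not> Suc k' \<le> k"
    using assms monoD[OF cf_q_mono, of "Suc k" k'] monoD[OF cf_q_mono, of "Suc k'" k] by auto
  then show ?thesis
    by linarith
qed

lemma cf_kN_bounds:
  assumes "1 \<le> N"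
  shows "cf_q w (cf_kN w N) \<le> N \<and> N < cf_q w (Suc (cf_kN w N))"
proof -
  define k where "k = (LEAST k. N < cf_q w (Suc k))"
  have "N < cf_q w (Suc N)"
    using cf_q_ge_index[of "Suc N"] by simp
  then have above: "N < cf_q w (Suc k)"
    unfolding k_def by (rule LeastI)
  have below: "cf_q w k \<le> N"
  proof (cases k)
    case (Suc j)
    then have "\<not> N < cf_q w (Suc j)"
      using not_less_Least[of j "\<lambda>k. N < cf_q w (Suc k)"] by (simp add: k_def)
    then show ?thesis
      by (simp add: Suc)
  qed (use assms in simp)
  have "\<exists>!k. cf_q w k \<le> N \<and> N < cf_q w (Suc k)"
    using below above cf_kN_unique by blast
  then show ?thesis
    unfolding cf_kN_def by (rule theI')
qed

lemma cf_kN_cf_q: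
  assumes "1 \<le> k"
  shows "cf_kN w (cf_q w k) = k"
proof -
  have "cf_q w k < cf_q w (Suc k)"
    using cf_q_strict_mono[OF assms] .
  then show ?thesis
    unfolding cf_kN_def using cf_kN_unique by (intro the_equality) auto
qed

lemma bounded_above_cf_kN_iff:
  fixes F :: "nat \<Rightarrow> real"
  assumes "0 \<le> s"
  shows "(\<exists>M. \<forall>N. F (cf_kN w N) - s * ln (real N) \<le> M)
     \<longleftrightarrow> (\<exists>M. \<forall>k. F k - s * ln (real (cf_q w k)) \<le> M)"
proof
  assume "\<exists>M. \<forall>N. F (cf_kN w N) - s * ln (real N) \<le> M"
  then obtain M where M: "\<And>N. F (cf_kN w N) - s * ln (real N) \<le> M"
    by blast
  have "F k - s * ln (real (cf_q w k)) \<le> max (F 0) M" for k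
  proof (cases "k = 0")
    case False
    then show ?thesis
      using M[of "cf_q w k"] cf_kN_cf_q[of k] by simp
  qed simp
  then show "\<exists>M. \<forall>k. F k - s * ln (real (cf_q w k)) \<le> M"
    by blast
next
  assume "\<exists>M. \<forall>k. F k - s * ln (real (cf_q w k)) \<le> M"
  then obtain M where M: "\<And>k. F k - s * ln (real (cf_q w k)) \<le> M"
    by blast
  have "F (cf_kN w N) - s * ln (real N) \<le> max (F (cf_kN w 0)) M" for N
  proof (cases "N = 0")
    case False
    then have "cf_q w (cf_kN w N) \<le> N"
      using cf_kN_bounds[of N] by simp
    then have "ln (real (cf_q w (cf_kN w N))) \<le> ln (real N)"
      using cf_q_ge_1[of "cf_kN w N"] by simp
    then show ?thesis
      using M[of "cf_kN w N"] assms mult_left_mono by fastforce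
  qed simp
  then show "\<exists>M. \<forall>N. F (cf_kN w N) - s * ln (real N) \<le> M"
    by blast
qed

lemma ln_inverse_cf_omega:
  "ln (1 / cf_omega w j) = ln (1 / cf_beta w (Suc j)) - ln (1 / cf_beta w j)"
  using cf_omega_pos[of j] cf_beta_pos[of j] by (simp add: cf_beta_Suc ln_div ln_mult)

lemma sum_cf_beta_ln_inverse_cf_omega:
  "(\<Sum>j=0..k. cf_beta w j * ln (1 / cf_omega w j)) =
     (\<Sum>j=0..k. (cf_beta w j - cf_beta w (Suc j)) * ln (1 / cf_beta w (Suc j)))
     + cf_beta w (Suc k) * ln (1 / cf_beta w (Suc k))"
proof (induction k)
  case 0
  show ?case
    by (simp add: ln_inverse_cf_omega cf_beta_Suc algebra_simps)
next
  case (Suc k)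
  show ?case
    unfolding sum.atLeast0_atMost_Suc Suc.IH ln_inverse_cf_omega[of "Suc k"]
    by (simp add: algebra_simps)
qed

lemma cf_beta_le_sqrt: "cf_beta w m \<le> sqrt (cf_beta w m)"
proof (rule real_le_rsqrt)
  show "(cf_beta w m)\<^sup>2 \<le> cf_beta w m"
    using cf_beta_pos[of m] cf_beta_le_1[of m] by (simp add: power2_eq_square mult_le_cancel_right1)
qed

lemma cf_summand_difference_bound:
  "\<bar>ln (real (cf_q w (Suc j))) / real (cf_q w j)
      - (cf_beta w j - cf_beta w (Suc j)) * ln (1 / cf_beta w (Suc j))\<bar>
    \<le> 4 * sqrt (cf_beta w j)"
proof -
  define Q where "Q = ln (real (cf_q w (Suc j)))"
  define u where "u = 1 / real (cf_q w j)"
  define b0 where "b0 = cf_beta w j"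
  define b1 where "b1 = cf_beta w (Suc j)"
  define L where "L = ln (1 / b1)"
  \<comment> \<open>\<open>b0 \<le> u \<le> b0 + b1\<close> and \<open>L - ln 2 \<le> Q \<le> L\<close> squeeze the difference between \<open>- b0 ln 2\<close> and \<open>2 b1 L\<close>.\<close>
  have u: "b0 \<le> u" "u \<le> b0 + b1"
    using cf_q_beta_le_1[of j] cf_q_ge_1[of j] cf_q_inverse_le[of j]
    by (simp_all add: u_def b0_def b1_def field_simps)
  have b: "0 < b1" "b1 \<le> b0" "b0 \<le> sqrt b0"
    using cf_beta_pos cf_beta_Suc_le cf_beta_le_sqrt by (simp_all add: b0_def b1_def)
  have Q: "0 \<le> Q" "Q \<le> L" "L \<le> ln 2 + Q"
    using cf_q_ge_1[of "Suc j"] ln_cf_q_le[of "Suc j"] ln_inverse_cf_beta_le[of "Suc j"]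
    by (simp_all add: Q_def L_def b1_def)
  have "Q * u \<le> L * (b0 + b1)"
    using u b Q by (intro mult_mono) auto
  moreover have "b1 * L \<le> 2 * sqrt b0"
  proof -
    have "sqrt b1 \<le> sqrt b0"
      using b by simp
    then show ?thesis
      using mult_ln_inverse_le_sqrt[of b1] b unfolding L_def by linarith
  qed
  ultimately have upper: "Q * u - (b0 - b1) * L \<le> 4 * sqrt b0"
    by (simp add: algebra_simps)
  have "(L - ln 2) * b0 \<le> Q * b0"
    using b Q by (intro mult_right_mono) auto
  also have "\<dots> \<le> Q * u"
    using u Q by (intro mult_left_mono) auto
  finally have "L * b0 - ln 2 * b0 \<le> Q * u"
    by (simp add: left_diff_distrib)
  moreover have "ln 2 * b0 \<le> b0"
    using ln_le_minus_one[of 2] b by simp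
  moreover have "0 \<le> b1 * L" "Q * u - (b0 - b1) * L = Q * u - L * b0 + b1 * L"
    using b Q by (simp_all add: algebra_simps)
  ultimately have lower: "- 4 * sqrt b0 \<le> Q * u - (b0 - b1) * L"
    using b by linarith
  show ?thesis
    using upper lower by (simp add: abs_le_iff Q_def u_def b0_def b1_def L_def)
qed

lemma cf_sums_bounded_difference:
  "\<exists>C. \<forall>k. \<bar>(\<Sum>j=0..k. ln (real (cf_q w (j+1))) / real (cf_q w j))
              - (\<Sum>j=0..k. cf_beta w j * ln (1 / cf_omega w j))\<bar> \<le> C"
proof (intro exI allI)
  fix k
  define T where "T j = ln (real (cf_q w (Suc j))) / real (cf_q w j)
    - (cf_beta w j - cf_beta w (Suc j)) * ln (1 / cf_beta w (Suc j))" for j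
  define R where "R = cf_beta w (Suc k) * ln (1 / cf_beta w (Suc k))"
  have summable: "summable (\<lambda>m. sqrt (cf_beta w m))"
    using cf_beta_pos cf_beta_Suc_Suc_le_half by (intro summable_sqrt_if_halving) (auto intro: less_imp_le)
  have "\<bar>\<Sum>j=0..k. T j\<bar> \<le> (\<Sum>j=0..k. \<bar>T j\<bar>)"
    by (rule sum_abs)
  also have "\<dots> \<le> (\<Sum>j=0..k. 4 * sqrt (cf_beta w j))"
    using cf_summand_difference_bound unfolding T_def by (intro sum_mono)
  also have "\<dots> \<le> 4 * (\<Sum>m. sqrt (cf_beta w m))"
    unfolding sum_distrib_left[symmetric] using summable cf_beta_pos
    by (intro mult_left_mono sum_le_suminf) (auto intro: less_imp_le)
  finally have sum_T: "\<bar>\<Sum>j=0..k. T j\<bar> \<le> 4 * (\<Sum>m. sqrt (cf_beta w m))" .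
  have "0 \<le> R"
    using cf_beta_pos[of "Suc k"] cf_beta_le_1[of "Suc k"] by (simp add: R_def)
  moreover have "R \<le> 2"
  proof -
    have "sqrt (cf_beta w (Suc k)) \<le> 1"
      using cf_beta_le_1 by simp
    then show ?thesis
      using mult_ln_inverse_le_sqrt[OF cf_beta_pos, of "Suc k"] unfolding R_def by linarith
  qed
  moreover have "(\<Sum>j=0..k. ln (real (cf_q w (j+1))) / real (cf_q w j))
      - (\<Sum>j=0..k. cf_beta w j * ln (1 / cf_omega w j)) = (\<Sum>j=0..k. T j) - R"
    unfolding sum_cf_beta_ln_inverse_cf_omega T_def R_def by (simp add: sum_subtractf)
  ultimately show "\<bar>(\<Sum>j=0..k. ln (real (cf_q w (j+1))) / real (cf_q w j))
      - (\<Sum>j=0..k. cf_beta w j * ln (1 / cf_omega w j))\<bar> \<le> 4 * (\<Sum>m. sqrt (cf_beta w m)) + 2"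
    using sum_T by linarith
qed

end

theorem mainTheorem6:
  fixes w s :: real
  assumes "0 < w" "w < 1" "w \<notin> \<rat>" "s > 0"
  shows "limsup (\<lambda>N::nat. ereal ((\<Sum>j=0..cf_kN w N. ln (real (cf_q w (j+1))) / real (cf_q w j))
                                   - s * ln (real N))) < \<infinity>
     \<longleftrightarrow>
         limsup (\<lambda>k::nat. ereal ((\<Sum>j=0..k. cf_beta w j * ln (1 / cf_omega w j))
                                   + s * ln (cf_beta w k))) < \<infinity>"
proof -
  interpret irrational_in_unit_interval w
    using assms by unfold_locales
  define A where "A k = (\<Sum>j=0..k. ln (real (cf_q w (j+1))) / real (cf_q w j))" for k
  define B where "B k = (\<Sum>j=0..k. cf_beta w j * ln (1 / cf_omega w j))" for k
  obtain C where C: "\<And>k. \<bar>A k - B k\<bar> \<le> C"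
    using cf_sums_bounded_difference unfolding A_def B_def by blast
  have "\<bar>(B k + s * ln (cf_beta w k)) - (A k - s * ln (real (cf_q w k)))\<bar> \<le> C + s * ln 2" for k
  proof -
    have "\<bar>ln (cf_beta w k) + ln (real (cf_q w k))\<bar> \<le> ln 2"
      using ln_cf_q_le[of k] ln_inverse_cf_beta_le[of k] cf_beta_pos[of k] by (simp add: ln_div)
    then have "\<bar>s * ln (cf_beta w k) + s * ln (real (cf_q w k))\<bar> \<le> s * ln 2"
      using assms(4) by (simp add: abs_mult flip: distrib_left)
    then show ?thesis
      using C[of k] by (simp add: abs_le_iff)
  qed
  then have "(\<exists>M. \<forall>k. B k + s * ln (cf_beta w k) \<le> M)
      \<longleftrightarrow> (\<exists>M. \<forall>k. A k - s * ln (real (cf_q w k)) \<le> M)"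
    by (rule bounded_above_iff_of_bounded_difference)
  also have "\<dots> \<longleftrightarrow> (\<exists>M. \<forall>N. A (cf_kN w N) - s * ln (real N) \<le> M)"
    using bounded_above_cf_kN_iff[of s A] assms(4) by simp
  finally show ?thesis
    unfolding limsup_less_infinity_iff_bounded A_def B_def by blast
qed

end
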